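(* Let $d\ge1$ and let $u_0v_1u_1\cdots v_nu_n$ be an irreducible loop pattern for $\mathcal{M}_d$. Then for every $L\subseteq\Sigma^*$, $\downarrow_{\preceq_d}(u_0v_1^*u_1\cdots v_n^*u_n)\in\mathrm{Adh}_{\preceq_d}(L)$ if and only if the pattern $u_0v_1u_1\cdots v_nu_n$ is associated to $L$.
   Context: $u\preceq_d v$ iff $u=u_0\cdots u_n$ and $v=u_0v_1u_1\cdots v_nu_n$ with each $|v_i|$ divisible by $d$. A loop pattern for $\mathcal{M}_d$ is a word $u_0v_1u_1\cdots v_nu_n$ with that decomposition where $v_i\in(\Sigma^d)^*$ for all $i$. It is irreducible if for each $i\in[1,n]$, deleting the loop $v_i$ yields a strictly smaller ideal: $\downarrow_{\preceq_d}(u_0v_1^*u_1\cdots v_{i-1}^*u_{i-1}u_iv_{i+1}^*\cdots v_n^*u_n)\subsetneq\downarrow_{\preceq_d}(u_0v_1^*u_1\cdots v_n^*u_n)$. The pattern is associated to $L$ if for every $k\ge0$ there is a word $\bar u_0\bar v_1\bar u_1\cdots\bar v_n\bar u_n\in L$ with $v_i^k\preceq_d\bar v_i\in\downarrow_{\preceq_d}v_i^*$ for $i\in[1,n]$, $u_i\preceq_d\bar u_i\in\downarrow_{\preceq_d}(v_i^*u_iv_{i+1}^* )$ for $i\in[1,n-1]$, $u_0\preceq_d\bar u_0\in\downarrow_{\preceq_d}(u_0v_1^* )$ and $u_n\preceq_d\bar u_n\in\downarrow_{\preceq_d}(v_n^*u_n)$. An ideal is a nonempty, downward closed, directed set; $\mathrm{Adh}_{\preceq_d}(L)$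 is the set of $\preceq_d$-ideals $I$ with $I\subseteq\downarrow_{\preceq_d}(L\cap I)$. *)

theory Defs
  imports Main
begin

text \<open>Words over the alphabet 'a are lists. A decomposition u0 v1 u1 ... vn un is
represented by the list us = [u0,...,un] (length n+1) and vs = [v1,...,vn] (length n).\<close>

fun interleave :: "'a list list \<Rightarrow> 'a list list \<Rightarrow> 'a list" where
  "interleave [u] [] = u"
| "interleave (u # us) (v # vs) = u @ v @ interleave us vs"
| "interleave _ _ = []"

definition subword_d :: "nat \<Rightarrow> 'a list \<Rightarrow> 'a list \<Rightarrow> bool" where
  "subword_d d u v \<longleftrightarrow> (\<exists>us vs. length us = length vs + 1 \<and> u = concat us
      \<and> v = interleave us vs \<and> (\<forall>x\<in>set vs. d dvd length x))"

definition down_d :: "nat \<Rightarrow> 'a list set \<Rightarrow> 'a list set" where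
  "down_d d S = {u. \<exists>v\<in>S. subword_d d u v}"

definition ideal_d :: "nat \<Rightarrow> 'a list set \<Rightarrow> bool" where
  "ideal_d d I \<longleftrightarrow> I \<noteq> {}
     \<and> (\<forall>u v. v \<in> I \<longrightarrow> subword_d d u v \<longrightarrow> u \<in> I)
     \<and> (\<forall>x\<in>I. \<forall>y\<in>I. \<exists>z\<in>I. subword_d d x z \<and> subword_d d y z)"

definition Adh_d :: "nat \<Rightarrow> 'a list set \<Rightarrow> 'a list set set" where
  "Adh_d d L = {I. ideal_d d I \<and> I \<subseteq> down_d d (L \<inter> I)}"

definition wstar :: "'a list \<Rightarrow> 'a list set" where
  "wstar v = {concat (replicate k v) | k. True}"

definition pat_lang :: "'a list list \<Rightarrow> 'a list list \<Rightarrow> 'a list set" where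
  "pat_lang us vs = {interleave us ws | ws. length ws = length vs
      \<and> (\<forall>i<length vs. ws ! i \<in> wstar (vs ! i))}"

definition loop_pattern :: "nat \<Rightarrow> 'a list list \<Rightarrow> 'a list list \<Rightarrow> bool" where
  "loop_pattern d us vs \<longleftrightarrow> length us = length vs + 1 \<and> (\<forall>v\<in>set vs. d dvd length v)"

text \<open>Irreducible: deleting the i-th loop (replacing v_i by the empty word, so that
 u_{i-1} u_i become adjacent) yields a strictly smaller ideal.\<close>
definition irreducible_pattern :: "nat \<Rightarrow> 'a list list \<Rightarrow> 'a list list \<Rightarrow> bool" where
  "irreducible_pattern d us vs \<longleftrightarrow> loop_pattern d us vs \<and>
     (\<forall>i<length vs. down_d d (pat_lang us (vs[i := []])) \<subset> down_d d (pat_lang us vs))"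

text \<open>Left / right loop contexts of u_i (0-indexed): v_i^* on the left if i>0,
 v_{i+1}^* on the right if i<n.\<close>
definition left_ctx :: "'a list list \<Rightarrow> nat \<Rightarrow> 'a list set" where
  "left_ctx vs i = (if i = 0 then {[]} else wstar (vs ! (i - 1)))"

definition right_ctx :: "'a list list \<Rightarrow> nat \<Rightarrow> 'a list set" where
  "right_ctx vs i = (if i < length vs then wstar (vs ! i) else {[]})"

definition associated :: "nat \<Rightarrow> 'a list list \<Rightarrow> 'a list list \<Rightarrow> 'a list set \<Rightarrow> bool" where
  "associated d us vs L \<longleftrightarrow> (\<forall>k::nat. \<exists>bus bvs.
      length bus = length us \<and> length bvs = length vs \<and>
      interleave bus bvs \<in> L \<and>
      (\<forall>i<length vs. subword_d d (concat (replicate k (vs ! i))) (bvs ! i)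
                     \<and> bvs ! i \<in> down_d d (wstar (vs ! i))) \<and>
      (\<forall>i<length us. subword_d d (us ! i) (bus ! i)
                     \<and> bus ! i \<in> down_d d {a @ us ! i @ b | a b. a \<in> left_ctx vs i \<and> b \<in> right_ctx vs i}))"

end

theory Submission
  imports Defs
begin

text \<open>
Write pump m for u0 v1^m u1 ... vn^m un.
For the implication from right to left, every element of the ideal embeds into some pump m; the
witness for k = m lies above it, and it lies below a larger pump because each of its factors lies
below a word of the form v^c ui v'^c or v^c.

For the converse, irreducibility yields c0 such that pump c0 does not embed into any pump M with
one loop deleted. With K = 2 c0 + k, pump K embeds into some w in L, which in turn embeds into
some pump M. Following the factors of pump K through both embeddings, the c0 copies of vi on either
side of the middle k copies must land inside the block vi^M of pump M, since otherwise pump c0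
would embed with loop i deleted. Cutting w at the images of these anchors yields the required
decomposition, because gaps between positions of equal residue modulo d can be filled in.
\<close>

section \<open>Embeddings with gaps of length divisible by d\<close>

inductive emb_d :: "nat \<Rightarrow> 'a list \<Rightarrow> 'a list \<Rightarrow> bool" for d where
  emb_d_Nil: "emb_d d [] []"
| emb_d_Cons: "emb_d d u v \<Longrightarrow> emb_d d (a # u) (a # v)"
| emb_d_gap: "emb_d d u v \<Longrightarrow> d dvd length x \<Longrightarrow> emb_d d u (x @ v)"

lemma emb_d_refl: "emb_d d u u"
  by (induction u) (auto intro: emb_d.intros)

lemma emb_d_length_mod: "emb_d d u v \<Longrightarrow> length v mod d = length u mod d"
proof (induction rule: emb_d.induct)
  case (emb_d_Cons u v a) then show ?case by (metis length_Cons mod_Suc_eq)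
qed (auto elim!: dvdE)

lemma emb_d_append: "emb_d d u1 v1 \<Longrightarrow> emb_d d u2 v2 \<Longrightarrow> emb_d d (u1 @ u2) (v1 @ v2)"
proof (induction rule: emb_d.induct)
  case emb_d_Nil then show ?case by simp
next
  case (emb_d_Cons u v a) then show ?case by (simp add: emb_d.emb_d_Cons)
next
  case (emb_d_gap u v x) then show ?case using emb_d.emb_d_gap[of d "u @ u2" "v @ v2" x] by simp
qed

lemma emb_d_gap_left: "d dvd length x \<Longrightarrow> emb_d d u (x @ u)"
  by (rule emb_d_gap[OF emb_d_refl])

lemma emb_d_gap_right:
  assumes "d dvd length x"
  shows "emb_d d u (u @ x)"
proof -
  have nil: "emb_d d [] x" using emb_d_gap[OF emb_d_Nil assms] by simp
  show ?thesis using emb_d_append[OF emb_d_refl[of d u] nil] by simp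
qed

lemma emb_d_append_split:
  "emb_d d z w \<Longrightarrow> z = x @ y \<Longrightarrow> \<exists>w1 w2. w = w1 @ w2 \<and> emb_d d x w1 \<and> emb_d d y w2"
proof (induction arbitrary: x y rule: emb_d.induct)
  case emb_d_Nil then show ?case using emb_d.emb_d_Nil by blast
next
  case (emb_d_Cons u v a)
  show ?case
  proof (cases x)
    case Nil
    then have "y = a # u" using emb_d_Cons.prems by simp
    then have "a # v = [] @ (a # v) \<and> emb_d d x [] \<and> emb_d d y (a # v)"
      using Nil emb_d.emb_d_Nil emb_d.emb_d_Cons[OF emb_d_Cons.hyps] by simp
    then show ?thesis by blast
  next
    case (Cons b x')
    with emb_d_Cons.prems have "b = a" "u = x' @ y" by auto
    with emb_d_Cons.IH obtain w1 w2 where w: "v = w1 @ w2" "emb_d d x' w1" "emb_d d y w2" by blast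
    have "a # v = (a # w1) @ w2 \<and> emb_d d x (a # w1) \<and> emb_d d y w2"
      using w Cons \<open>b = a\<close> emb_d.emb_d_Cons[OF w(2)] by simp
    then show ?thesis by blast
  qed
next
  case (emb_d_gap u v s)
  from emb_d_gap.IH[OF emb_d_gap.prems] obtain w1 w2
    where w: "v = w1 @ w2" "emb_d d x w1" "emb_d d y w2" by blast
  have "s @ v = (s @ w1) @ w2 \<and> emb_d d x (s @ w1) \<and> emb_d d y w2"
    using w emb_d.emb_d_gap[OF w(2) emb_d_gap.hyps(2)] by simp
  then show ?case by blast
qed

lemma emb_d_Cons_split:
  "emb_d d z w \<Longrightarrow> z = a # v \<Longrightarrow> \<exists>x w'. w = x @ a # w' \<and> d dvd length x \<and> emb_d d v w'"
proof (induction arbitrary: v rule: emb_d.induct)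
  case emb_d_Nil then show ?case by simp
next
  case (emb_d_Cons u v' b)
  then have "b # v' = [] @ a # v' \<and> d dvd length ([] :: 'a list) \<and> emb_d d v v'" by simp
  then show ?case by blast
next
  case (emb_d_gap u v' s)
  from emb_d_gap.IH[OF emb_d_gap.prems] obtain x w'
    where w: "v' = x @ a # w'" "d dvd length x" "emb_d d v w'" by blast
  have "s @ v' = (s @ x) @ a # w' \<and> d dvd length (s @ x) \<and> emb_d d v w'"
    using w emb_d_gap.hyps(2) by simp
  then show ?case by blast
qed

lemma emb_d_trans [trans]: "emb_d d u v \<Longrightarrow> emb_d d v w \<Longrightarrow> emb_d d u w"
proof (induction arbitrary: w rule: emb_d.induct)
  case emb_d_Nil then show ?case by simp
next
  case (emb_d_Cons u v a)
  from emb_d_Cons_split[OF emb_d_Cons.prems refl] obtain x w'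
    where w: "w = x @ a # w'" "d dvd length x" "emb_d d v w'" by blast
  have "emb_d d (a # u) (x @ a # w')"
    using emb_d.emb_d_gap[OF emb_d.emb_d_Cons[OF emb_d_Cons.IH[OF w(3)]] w(2)] .
  then show ?case using w(1) by simp
next
  case (emb_d_gap u v x)
  from emb_d_append_split[OF emb_d_gap.prems refl] obtain w1 w2
    where w: "w = w1 @ w2" "emb_d d x w1" "emb_d d v w2" by blast
  have "d dvd length w1"
    using emb_d_length_mod[OF w(2)] \<open>d dvd length x\<close> by (simp add: mod_eq_0_iff_dvd[symmetric])
  then show ?case using w(1) emb_d.emb_d_gap[OF emb_d_gap.IH[OF w(3)]] by blast
qed

lemma interleave_Cons_hd:
  "length us = length vs \<Longrightarrow> interleave ((a # u) # us) vs = a # interleave (u # us) vs"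
  by (cases vs; cases us) auto

lemma emb_d_concat_interleave:
  "length us = length vs + 1 \<Longrightarrow> \<forall>x\<in>set vs. d dvd length x \<Longrightarrow> emb_d d (concat us) (interleave us vs)"
proof (induction vs arbitrary: us)
  case Nil then obtain u where "us = [u]" by (cases us) auto
  then show ?case by (simp add: emb_d_refl)
next
  case (Cons x vs)
  then obtain u us' where us: "us = u # us'" by (cases us) auto
  with Cons have "emb_d d (concat us') (interleave us' vs)" by simp
  then have "emb_d d (concat us') (x @ interleave us' vs)" using Cons.prems by (simp add: emb_d_gap)
  then show ?case using us by (simp add: emb_d_append[OF emb_d_refl])
qed

lemma subword_d_if_emb_d: "emb_d d u v \<Longrightarrow> subword_d d u v"
proof (induction rule: emb_d.induct)
  case emb_d_Nil then show ?case unfolding subword_d_def by (rule_tac x="[[]]" in exI) auto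
next
  case (emb_d_Cons u v a)
  then obtain us vs where h: "length us = length vs + 1" "u = concat us" "v = interleave us vs"
    "\<forall>x\<in>set vs. d dvd length x" unfolding subword_d_def by blast
  then obtain u0 us' where us: "us = u0 # us'" by (cases us) auto
  have "interleave ((a # u0) # us') vs = a # v" using h us interleave_Cons_hd[of us' vs a u0] by simp
  moreover have "concat ((a # u0) # us') = a # u" using h us by simp
  ultimately show ?case unfolding subword_d_def using h us
    by (rule_tac x="(a # u0) # us'" in exI, rule_tac x=vs in exI) simp
next
  case (emb_d_gap u v x)
  then obtain us vs where h: "length us = length vs + 1" "u = concat us" "v = interleave us vs"
    "\<forall>x\<in>set vs. d dvd length x" unfolding subword_d_def by blast
  have "interleave ([] # us) (x # vs) = x @ v" using h by simp
  then show ?case unfolding subword_d_def using h emb_d_gap.hyps(2)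
    by (rule_tac x="[] # us" in exI, rule_tac x="x # vs" in exI) simp
qed

lemma subword_d_iff_emb_d: "subword_d d u v \<longleftrightarrow> emb_d d u v"
  using emb_d_concat_interleave subword_d_if_emb_d unfolding subword_d_def by blast

lemma emb_d_concat: "list_all2 (emb_d d) xs ys \<Longrightarrow> emb_d d (concat xs) (concat ys)"
  by (induction rule: list_all2_induct) (auto intro: emb_d_append emb_d_Nil)

lemma emb_d_concat_map:
  "(\<And>j. j \<in> set xs \<Longrightarrow> emb_d d (f j) (g j)) \<Longrightarrow> emb_d d (concat (map f xs)) (concat (map g xs))"
  by (induction xs) (auto intro: emb_d_append emb_d_Nil)

lemma emb_d_concat_split:
  "xs \<noteq> [] \<Longrightarrow> emb_d d (concat xs) v \<Longrightarrow> \<exists>ys. list_all2 (emb_d d) xs ys \<and> v = concat ys"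
proof (induction xs arbitrary: v)
  case Nil then show ?case by simp
next
  case (Cons x xs)
  show ?case
  proof (cases "xs = []")
    case True then show ?thesis using Cons.prems by (rule_tac x="[v]" in exI) simp
  next
    case False
    from emb_d_append_split[OF Cons.prems(2)] obtain v1 v2
      where "v = v1 @ v2" "emb_d d x v1" "emb_d d (concat xs) v2" by (metis concat.simps(2))
    with Cons.IH[OF False] obtain ys where "list_all2 (emb_d d) xs ys" "v2 = concat ys" by blast
    then show ?thesis using \<open>v = v1 @ v2\<close> \<open>emb_d d x v1\<close> by (rule_tac x="v1 # ys" in exI) simp
  qed
qed

lemma length_append_dvd_mod: "d dvd length z \<Longrightarrow> length (x @ z) mod d = length x mod d"
  by (auto elim!: dvdE)

lemma emb_d_window_extend:
  assumes "a \<le> p" "p \<le> q" "q \<le> b" "b \<le> length y" "d dvd (p - a)" "d dvd (b - q)"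
  shows "emb_d d (take (q - p) (drop p y)) (take (b - a) (drop a y))"
proof -
  have left: "take (b - a) (drop a y) = take (p - a) (drop a y) @ take (b - p) (drop p y)"
    using take_add[of "p - a" "b - p" "drop a y"] assms by simp
  have right: "take (b - p) (drop p y) = take (q - p) (drop p y) @ take (b - q) (drop q y)"
    using take_add[of "q - p" "b - q" "drop p y"] assms by simp
  have "emb_d d (take (q - p) (drop p y)) (take (q - p) (drop p y) @ take (b - q) (drop q y))"
    using assms by (intro emb_d_gap_right) simp
  also have "emb_d d \<dots> (take (p - a) (drop a y) @ take (q - p) (drop p y) @ take (b - q) (drop q y))"
    using assms by (intro emb_d_gap_left) simp
  finally show ?thesis using left right by simp
qed

lemma dvd_of_add_mod_eq: "(a + b) mod d = a mod d \<Longrightarrow> d dvd (b :: nat)"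
  using mod_eq_dvd_iff_nat[of a "a + b" d] by simp

lemma emb_d_take_extend:
  assumes "emb_d d x (take t y)" "length x mod d = length y mod d"
  shows "emb_d d x y"
proof -
  have "(length (take t y) + length (drop t y)) mod d = length (take t y) mod d"
    using emb_d_length_mod[OF assms(1)] assms(2) by (metis append_take_drop_id length_append)
  then have "emb_d d (take t y) (take t y @ drop t y)" by (intro emb_d_gap_right dvd_of_add_mod_eq)
  then show ?thesis using emb_d_trans[OF assms(1)] by simp
qed

lemma emb_d_drop_extend:
  assumes "emb_d d x (drop t y)" "length x mod d = length y mod d"
  shows "emb_d d x y"
proof -
  have "(length (drop t y) + length (take t y)) mod d = length (drop t y) mod d"
    using emb_d_length_mod[OF assms(1)] assms(2) by (metis add.commute append_take_drop_id length_append)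
  then have "emb_d d (drop t y) (take t y @ drop t y)" by (intro emb_d_gap_left dvd_of_add_mod_eq)
  then show ?thesis using emb_d_trans[OF assms(1)] by simp
qed

section \<open>Words and factorizations\<close>

definition word_pow :: "'a list \<Rightarrow> nat \<Rightarrow> 'a list" where
  "word_pow v m = concat (replicate m v)"

lemma word_pow_0 [simp]: "word_pow v 0 = []"
  unfolding word_pow_def by simp

lemma word_pow_Nil [simp]: "word_pow [] m = []"
  unfolding word_pow_def by simp

lemma word_pow_add: "word_pow v (a + b) = word_pow v a @ word_pow v b"
  unfolding word_pow_def by (simp add: replicate_add)

lemma word_pow_Suc_right: "word_pow v (Suc m) = word_pow v m @ v"
  using word_pow_add[of v m 1] by (simp add: word_pow_def)

lemma dvd_length_word_pow: "d dvd length v \<Longrightarrow> d dvd length (word_pow v m)"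
  unfolding word_pow_def by (simp add: length_concat sum_list_replicate)

lemma emb_d_word_pow_mono: "a \<le> b \<Longrightarrow> d dvd length v \<Longrightarrow> emb_d d (word_pow v a) (word_pow v b)"
  using word_pow_add[of v a "b - a"] emb_d_gap_right[OF dvd_length_word_pow] by simp

lemma wstar_iff_word_pow: "x \<in> wstar v \<longleftrightarrow> (\<exists>m. x = word_pow v m)"
  unfolding wstar_def word_pow_def by auto

definition seg :: "'a list list \<Rightarrow> nat \<Rightarrow> nat \<Rightarrow> 'a list" where
  "seg xs a b = concat (take (b - a) (drop a xs))"

definition offset :: "'a list list \<Rightarrow> nat \<Rightarrow> nat" where
  "offset xs j = length (seg xs 0 j)"

lemma seg_split: "a \<le> b \<Longrightarrow> b \<le> c \<Longrightarrow> seg xs a c = seg xs a b @ seg xs b c"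
  unfolding seg_def using take_add[of "b - a" "c - b" "drop a xs"] by simp

lemma seg_full: "seg xs 0 (length xs) = concat xs"
  unfolding seg_def by simp

lemma emb_d_seg: "list_all2 (emb_d d) xs ys \<Longrightarrow> emb_d d (seg xs a b) (seg ys a b)"
  unfolding seg_def by (intro emb_d_concat list_all2_takeI list_all2_dropI)

lemma seg_map_upt: "b \<le> N \<Longrightarrow> seg (map f [0..<N]) a b = concat (map f [a..<b])"
  unfolding seg_def by (cases "a \<le> b") (simp_all add: take_map drop_map take_upt)

lemma offset_0 [simp]: "offset xs 0 = 0"
  unfolding offset_def seg_def by simp

lemma offset_mono: "a \<le> b \<Longrightarrow> offset xs a \<le> offset xs b"
  unfolding offset_def using seg_split[of 0 a b xs] by simp

lemma offset_full: "offset xs (length xs) = length (concat xs)"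
  unfolding offset_def seg_full by simp

lemma seg_eq_drop_take:
  assumes "a \<le> b" "b \<le> length xs"
  shows "seg xs a b = drop (offset xs a) (take (offset xs b) (concat xs))"
proof -
  have "concat xs = seg xs 0 b @ seg xs b (length xs)"
    using seg_split[of 0 b "length xs" xs] assms by (simp add: seg_full)
  moreover have "seg xs 0 b = seg xs 0 a @ seg xs a b" using seg_split[of 0 a b xs] assms by simp
  ultimately show ?thesis unfolding offset_def by simp
qed

lemma ex_common_bound:
  "(\<And>j. j < (N::nat) \<Longrightarrow> \<exists>c. P j c) \<Longrightarrow> (\<And>j a b. j < N \<Longrightarrow> P j (a::nat) \<Longrightarrow> a \<le> b \<Longrightarrow> P j b)
   \<Longrightarrow> \<exists>c. \<forall>j<N. P j c"
proof (induction N)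
  case 0 then show ?case by simp
next
  case (Suc N)
  then obtain c where c: "\<forall>j<N. P j c" by (metis less_SucI)
  obtain c' where c': "P N c'" using Suc.prems(1) by blast
  have "P j (c + c')" if "j < Suc N" for j
  proof (cases "j < N")
    case True then show ?thesis using c Suc.prems(2)[of j c "c + c'"] that by simp
  next
    case False
    with that have "j = N" by simp
    then show ?thesis using c' Suc.prems(2)[of N c' "c + c'"] by simp
  qed
  then show ?case by blast
qed

lemma concat_map_telescope:
  "A 0 = [] \<Longrightarrow> (\<And>j. j < n \<Longrightarrow> B j @ C j @ A (Suc j) = D j) \<Longrightarrow>
   concat (map (\<lambda>j. A j @ U j @ B j @ C j) [0..<n]) @ A n = concat (map (\<lambda>j. U j @ D j) [0..<n])"
proof (induction n)
  case 0 then show ?case by simp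
next
  case (Suc n)
  then have IH: "concat (map (\<lambda>j. A j @ U j @ B j @ C j) [0..<n]) @ A n
      = concat (map (\<lambda>j. U j @ D j) [0..<n])" by simp
  have "B n @ C n @ A (Suc n) = D n" using Suc.prems by simp
  then show ?case by (simp flip: IH)
qed

lemma interleave_eq_concat_map: "length us = length ws + 1 \<Longrightarrow>
  interleave us ws = concat (map (\<lambda>j. us ! j @ ws ! j) [0..<length ws]) @ us ! length ws"
proof (induction ws arbitrary: us)
  case Nil then obtain u where "us = [u]" by (cases us) auto
  then show ?case by simp
next
  case (Cons w ws)
  then obtain u us' where us: "us = u # us'" by (cases us) auto
  have "[0..<length (w # ws)] = 0 # map Suc [0..<length ws]"
    by (simp add: map_Suc_upt upt_conv_Cons del: upt_Suc)
  then show ?case using Cons us by (simp add: comp_def)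
qed

lemma upt_split_at: "i < n \<Longrightarrow> [0..<n] = [0..<i] @ [i] @ [Suc i..<n]"
  using upt_add_eq_append[of 0 i "n - i"] by (simp add: upt_conv_Cons)

lemma mod_div_mult_add: "a < (b::nat) \<Longrightarrow> (i * b + a) mod b = a \<and> (i * b + a) div b = i"
  by simp

section \<open>Pumping a loop pattern\<close>

locale pattern =
  fixes d :: nat and us vs :: "'a list list"
  assumes length_us: "length us = length vs + 1"
    and dvd_length_loops: "\<And>v. v \<in> set vs \<Longrightarrow> d dvd length v"
begin

abbreviation "n \<equiv> length vs"

abbreviation ctx_lang :: "nat \<Rightarrow> 'a list set" where
  "ctx_lang j \<equiv> {a @ us ! j @ b | a b. a \<in> left_ctx vs j \<and> b \<in> right_ctx vs j}"

lemma dvd_length_loop: "j < n \<Longrightarrow> d dvd length (vs ! j)"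
  using dvd_length_loops nth_mem by blast

text \<open>Lists are 0-based: \<open>pump_prefix m i\<close> is the prefix of \<open>pump m\<close> ending with \<open>us ! i\<close>, and
\<open>pump_suffix m i\<close> the suffix after the block \<open>word_pow (vs ! i) m\<close> that follows it.\<close>

definition pump :: "nat \<Rightarrow> 'a list" where
  "pump m = concat (map (\<lambda>j. us ! j @ word_pow (vs ! j) m) [0..<n]) @ us ! n"

definition pump_prefix :: "nat \<Rightarrow> nat \<Rightarrow> 'a list" where
  "pump_prefix m i = concat (map (\<lambda>j. us ! j @ word_pow (vs ! j) m) [0..<i]) @ us ! i"

definition pump_suffix :: "nat \<Rightarrow> nat \<Rightarrow> 'a list" where
  "pump_suffix m i = concat (map (\<lambda>j. us ! j @ word_pow (vs ! j) m) [Suc i..<n]) @ us ! n"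

lemma pump_split: "i < n \<Longrightarrow> pump m = pump_prefix m i @ word_pow (vs ! i) m @ pump_suffix m i"
  unfolding pump_def pump_prefix_def pump_suffix_def by (simp add: upt_split_at[of i n])

lemma pump_eq_prefix: "pump m = pump_prefix m n"
  unfolding pump_def pump_prefix_def by simp

lemma pump_prefix_Suc: "pump_prefix m (Suc i) = pump_prefix m i @ word_pow (vs ! i) m @ us ! Suc i"
  unfolding pump_prefix_def by simp

lemma interleave_pump: "interleave us (map (\<lambda>v. word_pow v m) vs) = pump m"
  unfolding pump_def
  by (subst interleave_eq_concat_map) (auto simp: length_us intro!: arg_cong[where f=concat] map_cong)

lemma interleave_pump_delete:
  assumes i: "i < n"
  shows "interleave us (map (\<lambda>v. word_pow v m) (vs[i := []])) = pump_prefix m i @ pump_suffix m i"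
proof -
  define F where "F = (\<lambda>j. us ! j @ map (\<lambda>v. word_pow v m) (vs[i := []]) ! j)"
  define G where "G = (\<lambda>j. us ! j @ word_pow (vs ! j) m)"
  have before: "map F [0..<i] = map G [0..<i]"
    using i unfolding F_def G_def by (intro map_cong) (auto simp: nth_list_update)
  have after: "map F [Suc i..<n] = map G [Suc i..<n]"
    using i unfolding F_def G_def by (intro map_cong) (auto simp: nth_list_update)
  have "interleave us (map (\<lambda>v. word_pow v m) (vs[i := []])) = concat (map F [0..<n]) @ us ! n"
    using interleave_eq_concat_map[of us "map (\<lambda>v. word_pow v m) (vs[i := []])"] length_us
    unfolding F_def by simp
  also have "\<dots> = concat (map G [0..<i]) @ us ! i @ concat (map G [Suc i..<n]) @ us ! n"
    unfolding upt_split_at[OF i] map_append before after using i by (simp add: F_def)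
  finally show ?thesis unfolding pump_prefix_def pump_suffix_def G_def by simp
qed

lemma emb_d_pump_prefix_mono: "a \<le> b \<Longrightarrow> i \<le> n \<Longrightarrow> emb_d d (pump_prefix a i) (pump_prefix b i)"
  unfolding pump_prefix_def by (rule emb_d_append[OF emb_d_concat_map emb_d_refl])
    (auto intro!: emb_d_append[OF emb_d_refl] emb_d_word_pow_mono dvd_length_loop)

lemma emb_d_pump_suffix_mono: "a \<le> b \<Longrightarrow> emb_d d (pump_suffix a i) (pump_suffix b i)"
  unfolding pump_suffix_def by (rule emb_d_append[OF emb_d_concat_map emb_d_refl])
    (auto intro!: emb_d_append[OF emb_d_refl] emb_d_word_pow_mono dvd_length_loop)

lemma emb_d_pump_mono: "a \<le> b \<Longrightarrow> emb_d d (pump a) (pump b)"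
  using emb_d_pump_prefix_mono[of a b n] pump_eq_prefix by simp

lemma length_pump_prefix_mod: "i \<le> n \<Longrightarrow> length (pump_prefix m i) mod d = length (pump_prefix 0 i) mod d"
  using emb_d_length_mod[OF emb_d_pump_prefix_mono[of 0 m i]] by simp

lemma length_pump_suffix_mod: "length (pump_suffix m i) mod d = length (pump_suffix 0 i) mod d"
  using emb_d_length_mod[OF emb_d_pump_suffix_mono[of 0 m i]] by simp

lemma emb_d_pump_of_pat_lang:
  assumes "p \<in> pat_lang us vs"
  shows "\<exists>c. emb_d d p (pump c)"
proof -
  obtain ws where ws: "p = interleave us ws" "length ws = n" "\<forall>i<n. ws ! i \<in> wstar (vs ! i)"
    using assms unfolding pat_lang_def by blast
  have "\<forall>j. \<exists>m. j < n \<longrightarrow> ws ! j = word_pow (vs ! j) m" using ws(3) wstar_iff_word_pow by blast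
  then obtain e where e: "\<And>j. j < n \<Longrightarrow> ws ! j = word_pow (vs ! j) (e j)" by metis
  define c where "c = (\<Sum>j<n. e j)"
  have ec: "j < n \<Longrightarrow> e j \<le> c" for j unfolding c_def by (rule member_le_sum) auto
  have "p = concat (map (\<lambda>j. us ! j @ ws ! j) [0..<n]) @ us ! n"
    using interleave_eq_concat_map[of us ws] ws length_us by simp
  also have "emb_d d \<dots> (pump c)" unfolding pump_def
    by (intro emb_d_append emb_d_refl emb_d_concat_map)
      (auto simp: e intro!: emb_d_append[OF emb_d_refl] emb_d_word_pow_mono ec dvd_length_loop)
  finally show ?thesis by blast
qed

lemma pump_in_pat_lang: "pump m \<in> pat_lang us vs"
  unfolding pat_lang_def wstar_iff_word_pow
  by (rule CollectI, rule exI[of _ "map (\<lambda>v. word_pow v m) vs"]) (auto simp: interleave_pump)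

lemma down_pat_lang_eq: "down_d d (pat_lang us vs) = {u. \<exists>m. emb_d d u (pump m)}"
proof
  show "down_d d (pat_lang us vs) \<subseteq> {u. \<exists>m. emb_d d u (pump m)}"
  proof
    fix u assume "u \<in> down_d d (pat_lang us vs)"
    then obtain p where "p \<in> pat_lang us vs" "emb_d d u p" unfolding down_d_def subword_d_iff_emb_d by blast
    with emb_d_pump_of_pat_lang obtain c where "emb_d d p (pump c)" by blast
    with \<open>emb_d d u p\<close> show "u \<in> {u. \<exists>m. emb_d d u (pump m)}" using emb_d_trans by blast
  qed
  show "{u. \<exists>m. emb_d d u (pump m)} \<subseteq> down_d d (pat_lang us vs)"
    unfolding down_d_def subword_d_iff_emb_d using pump_in_pat_lang by blast
qed

lemma ideal_down_pat_lang: "ideal_d d (down_d d (pat_lang us vs))"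
  unfolding ideal_d_def down_pat_lang_eq subword_d_iff_emb_d
proof (intro conjI allI impI ballI)
  show "{u. \<exists>m. emb_d d u (pump m)} \<noteq> {}" using emb_d_refl by blast
  show "u \<in> {u. \<exists>m. emb_d d u (pump m)}" if "v \<in> {u. \<exists>m. emb_d d u (pump m)}" "emb_d d u v" for u v
    using that emb_d_trans by blast
  fix x y assume "x \<in> {u. \<exists>m. emb_d d u (pump m)}" "y \<in> {u. \<exists>m. emb_d d u (pump m)}"
  then obtain a b where "emb_d d x (pump a)" "emb_d d y (pump b)" by blast
  then have "emb_d d x (pump (a + b))" "emb_d d y (pump (a + b))"
    using emb_d_trans[OF _ emb_d_pump_mono] by (metis le_add1, metis le_add2)
  then show "\<exists>z\<in>{u. \<exists>m. emb_d d u (pump m)}. emb_d d x z \<and> emb_d d y z" using emb_d_refl by blast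
qed

section \<open>Association implies adherence\<close>

definition loop_left :: "nat \<Rightarrow> nat \<Rightarrow> 'a list" where
  "loop_left m j = (if j = 0 then [] else word_pow (vs ! (j - 1)) m)"

definition loop_right :: "nat \<Rightarrow> nat \<Rightarrow> 'a list" where
  "loop_right m j = (if j < n then word_pow (vs ! j) m else [])"

abbreviation ctx_pump :: "nat \<Rightarrow> nat \<Rightarrow> 'a list" where
  "ctx_pump m j \<equiv> loop_left m j @ us ! j @ loop_right m j"

lemma dvd_length_loop_left: "j \<le> n \<Longrightarrow> d dvd length (loop_left m j)"
  unfolding loop_left_def by (auto intro!: dvd_length_word_pow dvd_length_loop)

lemma dvd_length_loop_right: "d dvd length (loop_right m j)"
  unfolding loop_right_def by (auto intro!: dvd_length_word_pow dvd_length_loop)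

lemma emb_d_ctx_pump_mono: "a \<le> b \<Longrightarrow> j \<le> n \<Longrightarrow> emb_d d (ctx_pump a j) (ctx_pump b j)"
  unfolding loop_left_def loop_right_def
  by (intro emb_d_append emb_d_refl) (auto intro!: emb_d_word_pow_mono dvd_length_loop emb_d_refl)

lemma mem_down_ctx_lang_iff:
  assumes j: "j \<le> n"
  shows "x \<in> down_d d (ctx_lang j) \<longleftrightarrow> (\<exists>c. emb_d d x (ctx_pump c j))"
proof
  assume "x \<in> down_d d (ctx_lang j)"
  then obtain a b where ab: "emb_d d x (a @ us ! j @ b)" "a \<in> left_ctx vs j" "b \<in> right_ctx vs j"
    unfolding down_d_def subword_d_iff_emb_d by blast
  obtain p where p: "a = loop_left p j"
    using ab(2) unfolding left_ctx_def loop_left_def by (auto simp: wstar_iff_word_pow split: if_splits)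
  obtain q where q: "b = loop_right q j"
    using ab(3) unfolding right_ctx_def loop_right_def by (auto simp: wstar_iff_word_pow split: if_splits)
  have "emb_d d (loop_left p j @ us ! j @ loop_right q j) (ctx_pump (p + q) j)"
    using j unfolding loop_left_def loop_right_def
    by (intro emb_d_append emb_d_refl) (auto intro!: emb_d_word_pow_mono dvd_length_loop emb_d_refl)
  then show "\<exists>c. emb_d d x (ctx_pump c j)" using ab(1) p q emb_d_trans by blast
next
  assume "\<exists>c. emb_d d x (ctx_pump c j)"
  moreover have "loop_left c j \<in> left_ctx vs j" "loop_right c j \<in> right_ctx vs j" for c
    unfolding left_ctx_def right_ctx_def loop_left_def loop_right_def by (auto simp: wstar_iff_word_pow)
  ultimately show "x \<in> down_d d (ctx_lang j)" unfolding down_d_def subword_d_iff_emb_d by blast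
qed

lemma ex_common_ctx_exponent:
  assumes "length bus = length us" and "\<forall>i<length us. bus ! i \<in> down_d d (ctx_lang i)"
  shows "\<exists>c. \<forall>j<Suc n. emb_d d (bus ! j) (ctx_pump c j)"
proof (rule ex_common_bound)
  show "\<exists>c. emb_d d (bus ! j) (ctx_pump c j)" if "j < Suc n" for j
  proof -
    have "bus ! j \<in> down_d d (ctx_lang j)" using assms that length_us by simp
    then show ?thesis using mem_down_ctx_lang_iff that by simp
  qed
  show "emb_d d (bus ! j) (ctx_pump b j)"
    if "j < Suc n" "emb_d d (bus ! j) (ctx_pump a j)" "a \<le> b" for j a b
    using emb_d_trans[OF that(2) emb_d_ctx_pump_mono[OF that(3)]] that(1) by simp
qed

lemma ex_common_loop_exponent:
  assumes "\<forall>i<n. bvs ! i \<in> down_d d (wstar (vs ! i))"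
  shows "\<exists>c. \<forall>j<n. emb_d d (bvs ! j) (word_pow (vs ! j) c)"
proof (rule ex_common_bound)
  show "\<exists>c. emb_d d (bvs ! j) (word_pow (vs ! j) c)" if j: "j < n" for j
  proof -
    obtain v where "v \<in> wstar (vs ! j)" "emb_d d (bvs ! j) v"
      using assms j unfolding down_d_def subword_d_iff_emb_d by blast
    then show ?thesis unfolding wstar_iff_word_pow by blast
  qed
  show "emb_d d (bvs ! j) (word_pow (vs ! j) b)"
    if "j < n" "emb_d d (bvs ! j) (word_pow (vs ! j) a)" "a \<le> b" for j a b
    using emb_d_trans[OF that(2) emb_d_word_pow_mono[OF that(3) dvd_length_loop[OF that(1)]]] .
qed

text \<open>With one exponent c bounding all factors, the copies of \<open>vs ! j\<close> on both sides of each
boundary telescope into \<open>pump (3 * c)\<close>.\<close>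

lemma interleave_in_down_pat_lang:
  assumes len: "length bus = length us" "length bvs = n"
    and loops: "\<forall>i<n. bvs ! i \<in> down_d d (wstar (vs ! i))"
    and ctxs: "\<forall>i<length us. bus ! i \<in> down_d d (ctx_lang i)"
  shows "interleave bus bvs \<in> down_d d (pat_lang us vs)"
proof -
  obtain c1 where c1: "\<forall>j<Suc n. emb_d d (bus ! j) (ctx_pump c1 j)"
    using ex_common_ctx_exponent[OF len(1) ctxs] by blast
  obtain c2 where c2: "\<forall>j<n. emb_d d (bvs ! j) (word_pow (vs ! j) c2)"
    using ex_common_loop_exponent[OF loops] by blast
  define c where "c = c1 + c2"
  have bus_c: "emb_d d (bus ! j) (ctx_pump c j)" if "j < Suc n" for j
    using emb_d_trans[OF c1[rule_format, OF that] emb_d_ctx_pump_mono[of c1 c j]] that unfolding c_def by simp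
  have bvs_c: "emb_d d (bvs ! j) (word_pow (vs ! j) c)" if "j < n" for j
    using emb_d_trans[OF c2[rule_format, OF that] emb_d_word_pow_mono[OF _ dvd_length_loop[OF that]]]
    unfolding c_def by simp
  have "interleave bus bvs = concat (map (\<lambda>j. bus ! j @ bvs ! j) [0..<n]) @ bus ! n"
    using interleave_eq_concat_map[of bus bvs] len length_us by simp
  also have "emb_d d \<dots> (concat (map (\<lambda>j. ctx_pump c j @ word_pow (vs ! j) c) [0..<n]) @ ctx_pump c n)"
    using bus_c bvs_c by (intro emb_d_append emb_d_concat_map) auto
  also have "\<dots> = pump (c + c + c)"
  proof -
    have "concat (map (\<lambda>j. loop_left c j @ us ! j @ loop_right c j @ word_pow (vs ! j) c) [0..<n])
        @ loop_left c n = concat (map (\<lambda>j. us ! j @ word_pow (vs ! j) (c + c + c)) [0..<n])"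
      by (rule concat_map_telescope) (auto simp: loop_left_def loop_right_def word_pow_add)
    then show ?thesis unfolding pump_def by (simp add: loop_right_def)
  qed
  finally show ?thesis unfolding down_pat_lang_eq by blast
qed

lemma associated_imp_Adh:
  assumes "associated d us vs L"
  shows "down_d d (pat_lang us vs) \<in> Adh_d d L"
proof -
  let ?I = "down_d d (pat_lang us vs)"
  have "u \<in> down_d d (L \<inter> ?I)" if "u \<in> ?I" for u
  proof -
    from that obtain m where "emb_d d u (pump m)" unfolding down_pat_lang_eq by blast
    from assms obtain bus bvs where b: "length bus = length us" "length bvs = n" "interleave bus bvs \<in> L"
      "\<forall>i<n. emb_d d (word_pow (vs ! i) m) (bvs ! i) \<and> bvs ! i \<in> down_d d (wstar (vs ! i))"
      "\<forall>i<length us. emb_d d (us ! i) (bus ! i) \<and> bus ! i \<in> down_d d (ctx_lang i)"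
      unfolding associated_def subword_d_iff_emb_d word_pow_def[symmetric] by blast
    have z: "interleave bus bvs = concat (map (\<lambda>j. bus ! j @ bvs ! j) [0..<n]) @ bus ! n"
      using interleave_eq_concat_map[of bus bvs] b(1,2) length_us by simp
    note \<open>emb_d d u (pump m)\<close>
    also have "emb_d d (pump m) (interleave bus bvs)"
      unfolding z pump_def using b(4,5) length_us by (intro emb_d_append emb_d_concat_map) auto
    finally have "emb_d d u (interleave bus bvs)" .
    moreover have "interleave bus bvs \<in> ?I"
      by (rule interleave_in_down_pat_lang) (use b in auto)
    ultimately show ?thesis
      using b(3) unfolding down_d_def[of d "L \<inter> ?I"] subword_d_iff_emb_d by blast
  qed
  then show ?thesis unfolding Adh_d_def using ideal_down_pat_lang by blast
qed

section \<open>Adherence implies association\<close>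

lemma pump_around_ctx:
  assumes j: "j \<le> n"
  obtains P R where "pump m = P @ ctx_pump m j @ R"
    and "length P = (if j = 0 then 0 else length (pump_prefix m (j - 1)))"
    and "length (P @ loop_left m j @ us ! j) = length (pump_prefix m j)"
proof -
  obtain R where R: "pump m = pump_prefix m j @ loop_right m j @ R"
  proof (cases "j < n")
    case True
    then show ?thesis using that[of "pump_suffix m j"] pump_split[OF True, of m]
      unfolding loop_right_def by simp
  next
    case False
    with j have "j = n" by simp
    then show ?thesis using that[of "[]"] pump_eq_prefix unfolding loop_right_def by simp
  qed
  show ?thesis
  proof (cases j)
    case 0
    then have "pump_prefix m j = [] @ loop_left m j @ us ! j"
      unfolding pump_prefix_def loop_left_def by simp
    then show ?thesis using that[of "[]" R] R 0 by simp
  next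
    case (Suc i)
    then have "pump_prefix m j = pump_prefix m i @ loop_left m j @ us ! j"
      unfolding loop_left_def using pump_prefix_Suc by simp
    then show ?thesis using that[of "pump_prefix m i" R] R Suc by simp
  qed
qed

text \<open>\<open>block K\<close> lists the \<open>n * Suc K + 1\<close> factors u0, v1 (K times), u1, ... of \<open>pump K\<close>;
factor \<open>i * Suc K\<close> is \<open>us ! i\<close>.\<close>

definition block :: "nat \<Rightarrow> nat \<Rightarrow> 'a list" where
  "block K j = (if j mod Suc K = 0 then us ! (j div Suc K) else vs ! (j div Suc K))"

definition block_seg :: "nat \<Rightarrow> nat \<Rightarrow> nat \<Rightarrow> 'a list" where
  "block_seg K a b = concat (map (block K) [a..<b])"

lemma block_ctx: "block K (i * Suc K) = us ! i"
  using mod_div_mult_add[of 0 "Suc K" i] unfolding block_def by (simp only: add_0_right) simp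

lemma block_loop: "t < K \<Longrightarrow> block K (i * Suc K + Suc t) = vs ! i"
  using mod_div_mult_add[of "Suc t" "Suc K" i] unfolding block_def by (simp only:) simp

lemma block_seg_split: "a \<le> b \<Longrightarrow> b \<le> c \<Longrightarrow> block_seg K a c = block_seg K a b @ block_seg K b c"
  unfolding block_seg_def using upt_add_eq_append[of a b "c - b"] by simp

lemma block_seg_Suc: "a \<le> b \<Longrightarrow> block_seg K a (Suc b) = block_seg K a b @ block K b"
  using block_seg_split[of a b "Suc b" K] unfolding block_seg_def by simp

lemma block_seg_loop:
  "t \<le> K \<Longrightarrow> block_seg K (i * Suc K + 1) (i * Suc K + 1 + t) = word_pow (vs ! i) t"
proof (induction t)
  case 0 then show ?case unfolding block_seg_def by simp
next
  case (Suc t)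
  define a where "a = i * Suc K + 1"
  have "block_seg K a (a + Suc t) = block_seg K a (a + t) @ block K (a + t)"
    using block_seg_Suc[of a "a + t" K] by simp
  moreover have "block K (a + t) = vs ! i" using block_loop[of t K i] Suc.prems unfolding a_def by simp
  moreover have "block_seg K a (a + t) = word_pow (vs ! i) t" using Suc unfolding a_def by simp
  ultimately show ?case unfolding a_def[symmetric] by (simp add: word_pow_Suc_right)
qed

lemma block_seg_prefix: "i \<le> n \<Longrightarrow> block_seg K 0 (i * Suc K + 1) = pump_prefix K i"
proof (induction i)
  case 0 then show ?case unfolding block_seg_def pump_prefix_def block_def by simp
next
  case (Suc i)
  define a where "a = i * Suc K + 1"
  have e: "Suc i * Suc K + 1 = Suc (a + K)" unfolding a_def by simp
  have "block_seg K 0 (Suc (a + K)) = block_seg K 0 a @ block_seg K a (a + K) @ block K (a + K)"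
    using block_seg_Suc[of 0 "a + K" K] block_seg_split[of 0 a "a + K" K] by simp
  moreover have "block K (a + K) = us ! Suc i"
  proof -
    have "a + K = Suc i * Suc K" unfolding a_def by simp
    then show ?thesis by (simp only: block_ctx)
  qed
  moreover have "block_seg K a (a + K) = word_pow (vs ! i) K" using block_seg_loop[of K K i] unfolding a_def by simp
  moreover have "block_seg K 0 a = pump_prefix K i" using Suc unfolding a_def by simp
  ultimately show ?case unfolding e by (simp add: pump_prefix_Suc)
qed

lemma block_seg_prefix_loop:
  "i \<le> n \<Longrightarrow> t \<le> K \<Longrightarrow> block_seg K 0 (i * Suc K + 1 + t) = pump_prefix K i @ word_pow (vs ! i) t"
  using block_seg_split[of 0 "i * Suc K + 1" "i * Suc K + 1 + t" K] block_seg_loop[of t K i]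
    block_seg_prefix[of i K] by simp

lemma block_seg_pump: "block_seg K 0 (n * Suc K + 1) = pump K"
  using block_seg_prefix[of n K] pump_eq_prefix by simp

lemma block_index_le: "i < n \<Longrightarrow> t \<le> K \<Longrightarrow> i * Suc K + 1 + t \<le> n * Suc K + 1"
proof -
  assume "i < n" "t \<le> K"
  moreover have "Suc i * Suc K \<le> n * Suc K" using \<open>i < n\<close> by (intro mult_le_mono1) simp
  ultimately show ?thesis by simp
qed

lemma block_seg_loop_suffix:
  assumes i: "i < n" and t: "t \<le> K"
  shows "block_seg K (i * Suc K + 1 + t) (n * Suc K + 1) = word_pow (vs ! i) (K - t) @ pump_suffix K i"
proof -
  have "pump K = block_seg K 0 (i * Suc K + 1 + t) @ block_seg K (i * Suc K + 1 + t) (n * Suc K + 1)"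
    using block_seg_pump block_seg_split[of 0 _ _ K, OF _ block_index_le[OF i t]] by simp
  also have "block_seg K 0 (i * Suc K + 1 + t) = pump_prefix K i @ word_pow (vs ! i) t"
    using block_seg_prefix_loop i t by simp
  finally have "pump K = pump_prefix K i @ word_pow (vs ! i) t @ block_seg K (i * Suc K + 1 + t) (n * Suc K + 1)"
    by simp
  moreover have "pump K = pump_prefix K i @ word_pow (vs ! i) t @ word_pow (vs ! i) (K - t) @ pump_suffix K i"
    using pump_split[OF i, of K] word_pow_add[of "vs ! i" t "K - t"] t by simp
  ultimately show ?thesis by simp
qed

end

text \<open>\<open>Ws\<close> and \<open>Ys\<close> factor the embeddings of \<open>pump K\<close> into a word w = \<open>concat Ws\<close> and of w into
\<open>pump M\<close> along the blocks of \<open>pump K\<close>; \<open>c0\<close> is an exponent witnessing irreducibility for every loop.\<close>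

locale pump_chain = pattern +
  fixes c0 k M :: nat and Ws Ys :: "'a list list"
  assumes pump_c0_not_emb:
      "\<And>i M'. i < length vs \<Longrightarrow> \<not> emb_d d (pump c0) (pump_prefix M' i @ pump_suffix M' i)"
    and c0_le_M: "c0 \<le> M"
    and blocks_emb_Ws:
      "list_all2 (emb_d d) (map (block (2 * c0 + k)) [0..<length vs * Suc (2 * c0 + k) + 1]) Ws"
    and Ws_emb_Ys: "list_all2 (emb_d d) Ws Ys"
    and concat_Ys: "concat Ys = pump M"
begin

abbreviation "K \<equiv> 2 * c0 + k"
abbreviation "N \<equiv> n * Suc K + 1"

lemma length_Ws: "length Ws = N"
  using blocks_emb_Ws list_all2_lengthD by fastforce

lemma length_Ys: "length Ys = N"
  using Ws_emb_Ys length_Ws list_all2_lengthD by fastforce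

lemma blocks_emb_Ys: "list_all2 (emb_d d) (map (block K) [0..<N]) Ys"
  by (rule list_all2_trans[OF _ blocks_emb_Ws Ws_emb_Ys]) (rule emb_d_trans)

lemma seg_blocks: "b \<le> N \<Longrightarrow> seg (map (block K) [0..<N]) a b = block_seg K a b"
  unfolding block_seg_def by (rule seg_map_upt)

lemma emb_d_block_seg_Ys: "b \<le> N \<Longrightarrow> emb_d d (block_seg K a b) (seg Ys a b)"
  using emb_d_seg[OF blocks_emb_Ys, of a b] seg_blocks by simp

lemma offset_Ys_mod: "j \<le> N \<Longrightarrow> offset Ys j mod d = length (block_seg K 0 j) mod d"
  unfolding offset_def using emb_d_length_mod[OF emb_d_block_seg_Ys] by simp

lemma offset_Ys_N: "offset Ys N = length (pump M)"
  using offset_full[of Ys] length_Ys concat_Ys by simp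

lemma seg_Ys_eq:
  "a \<le> b \<Longrightarrow> b \<le> N \<Longrightarrow> seg Ys a b = take (offset Ys b - offset Ys a) (drop (offset Ys a) (pump M))"
  using seg_eq_drop_take[of a b Ys] length_Ys concat_Ys by (simp add: drop_take)

text \<open>The anchors: if the image of the first (last) c0 copies of loop i did not end (start) inside
the block \<open>word_pow (vs ! i) M\<close> of \<open>pump M\<close>, then \<open>pump c0\<close> would embed into \<open>pump M\<close> with loop i
deleted, the gap being filled thanks to the matching residues modulo d.\<close>

lemma anchor_left:
  assumes i: "i < n"
  shows "length (pump_prefix M i) < offset Ys (i * Suc K + 1 + c0)"
proof (rule ccontr)
  define t where "t = i * Suc K + 1 + c0"
  define p where "p = offset Ys t"
  assume "\<not> length (pump_prefix M i) < offset Ys (i * Suc K + 1 + c0)"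
  then have p_le: "p \<le> length (pump_prefix M i)" unfolding p_def t_def by simp
  have tN: "t \<le> N" unfolding t_def using block_index_le[OF i, of c0 K] by simp
  have "emb_d d (pump_prefix c0 i @ word_pow (vs ! i) c0) (pump_prefix K i @ word_pow (vs ! i) c0)"
    using i by (intro emb_d_append emb_d_pump_prefix_mono emb_d_refl) auto
  also have "\<dots> = block_seg K 0 t" unfolding t_def using block_seg_prefix_loop[of i c0 K] i by simp
  also have "emb_d d \<dots> (seg Ys 0 t)" using emb_d_block_seg_Ys[OF tN] .
  also have "seg Ys 0 t = take p (pump_prefix M i)"
    using seg_Ys_eq[of 0 t] tN pump_split[OF i, of M] p_le unfolding p_def by simp
  finally have "emb_d d (pump_prefix c0 i @ word_pow (vs ! i) c0) (pump_prefix M i)"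
  proof (rule emb_d_take_extend)
    show "length (pump_prefix c0 i @ word_pow (vs ! i) c0) mod d = length (pump_prefix M i) mod d"
      using length_append_dvd_mod[OF dvd_length_word_pow[OF dvd_length_loop[OF i]]]
        length_pump_prefix_mod[of i c0] length_pump_prefix_mod[of i M] i by simp
  qed
  then have "emb_d d ((pump_prefix c0 i @ word_pow (vs ! i) c0) @ pump_suffix c0 i)
      (pump_prefix M i @ pump_suffix M i)"
    using emb_d_pump_suffix_mono[OF c0_le_M] by (rule emb_d_append)
  then show False using pump_c0_not_emb[OF i] pump_split[OF i, of c0] by simp
qed

lemma anchor_right:
  assumes i: "i < n"
  shows "offset Ys (i * Suc K + 1 + (c0 + k)) < length (pump_prefix M i) + length (word_pow (vs ! i) M)"
proof (rule ccontr)
  define t where "t = i * Suc K + 1 + (c0 + k)"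
  define q where "q = offset Ys t"
  define E where "E = length (pump_prefix M i) + length (word_pow (vs ! i) M)"
  assume "\<not> offset Ys (i * Suc K + 1 + (c0 + k)) < length (pump_prefix M i) + length (word_pow (vs ! i) M)"
  then have E_le: "E \<le> q" unfolding q_def E_def t_def by simp
  have tN: "t \<le> N" unfolding t_def using block_index_le[OF i, of "c0 + k" K] by simp
  have split_M: "pump M = (pump_prefix M i @ word_pow (vs ! i) M) @ pump_suffix M i"
    using pump_split[OF i, of M] by simp
  have "emb_d d (word_pow (vs ! i) c0 @ pump_suffix c0 i) (word_pow (vs ! i) c0 @ pump_suffix K i)"
    by (intro emb_d_append emb_d_pump_suffix_mono emb_d_refl) simp
  also have "\<dots> = block_seg K t N" unfolding t_def using block_seg_loop_suffix[of i "c0 + k"] i by simp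
  also have "emb_d d \<dots> (seg Ys t N)" using emb_d_block_seg_Ys by simp
  also have "seg Ys t N = drop q (pump M)"
    using seg_Ys_eq[OF tN] offset_Ys_N offset_mono[OF tN, of Ys] unfolding q_def by simp
  also have "\<dots> = drop (q - E) (pump_suffix M i)" using split_M E_le unfolding E_def by simp
  finally have "emb_d d (word_pow (vs ! i) c0 @ pump_suffix c0 i) (pump_suffix M i)"
  proof (rule emb_d_drop_extend)
    show "length (word_pow (vs ! i) c0 @ pump_suffix c0 i) mod d = length (pump_suffix M i) mod d"
      using length_pump_suffix_mod[of c0 i] length_pump_suffix_mod[of M i]
        dvd_length_word_pow[OF dvd_length_loop[OF i], of c0] by (auto elim!: dvdE)
  qed
  then have "emb_d d (pump_prefix c0 i @ word_pow (vs ! i) c0 @ pump_suffix c0 i)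
      (pump_prefix M i @ pump_suffix M i)"
    using emb_d_pump_prefix_mono[OF c0_le_M, of i] i by (intro emb_d_append) auto
  then show False using pump_c0_not_emb[OF i] pump_split[OF i, of c0] by simp
qed

lemma emb_d_seg_Ws_window:
  assumes ab: "a \<le> b" "b \<le> N"
    and bounds: "S \<le> offset Ys a" "offset Ys b \<le> E" "E \<le> length (pump M)"
    and residues: "offset Ys a mod d = S mod d" "offset Ys b mod d = E mod d"
  shows "emb_d d (seg Ws a b) (take (E - S) (drop S (pump M)))"
proof -
  have "emb_d d (seg Ws a b) (seg Ys a b)" using emb_d_seg[OF Ws_emb_Ys] .
  also have "seg Ys a b = take (offset Ys b - offset Ys a) (drop (offset Ys a) (pump M))"
    using seg_Ys_eq[OF ab] .
  also have "emb_d d \<dots> (take (E - S) (drop S (pump M)))"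
  proof (rule emb_d_window_extend)
    show "d dvd offset Ys a - S" using bounds(1) residues(1) mod_eq_dvd_iff_nat by metis
    show "d dvd E - offset Ys b" using bounds(2) residues(2) mod_eq_dvd_iff_nat by metis
    show "offset Ys a \<le> offset Ys b" using offset_mono[OF ab(1)] .
  qed (use bounds in auto)
  finally show ?thesis .
qed

text \<open>Block indices: \<open>ctx_start j\<close> .. \<open>ctx_end j\<close> delimit the factors c0 copies of \<open>vs ! (j - 1)\<close>,
\<open>us ! j\<close>, c0 copies of \<open>vs ! j\<close> of \<open>pump K\<close>; between \<open>ctx_end j\<close> and \<open>ctx_start (Suc j)\<close> lie the
middle k copies of \<open>vs ! j\<close>.\<close>

definition ctx_start :: "nat \<Rightarrow> nat" where
  "ctx_start j = (if j = 0 then 0 else (j - 1) * Suc K + 1 + (c0 + k))"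

definition ctx_end :: "nat \<Rightarrow> nat" where
  "ctx_end j = (if j < n then j * Suc K + 1 + c0 else N)"

lemma ctx_start_le_end: "j \<le> n \<Longrightarrow> ctx_start j \<le> ctx_end j"
proof (cases j)
  case (Suc i)
  assume "j \<le> n"
  have "ctx_start j = i * Suc K + 1 + (c0 + k)" unfolding ctx_start_def Suc by simp
  moreover have "ctx_end j \<in> {Suc i * Suc K + 1 + c0, Suc i * Suc K + 1}"
    unfolding ctx_end_def using \<open>j \<le> n\<close> Suc by (cases "j < n") auto
  ultimately show ?thesis by auto
qed (simp add: ctx_start_def)

lemma ctx_end_le_start_Suc: "j < n \<Longrightarrow> ctx_end j \<le> ctx_start (Suc j)"
  unfolding ctx_end_def ctx_start_def by simp

lemma ctx_end_le_N: "ctx_end j \<le> N"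
  unfolding ctx_end_def using block_index_le[of j c0 K] by auto

lemma ctx_start_le_N: "j \<le> n \<Longrightarrow> ctx_start j \<le> N"
  using ctx_start_le_end ctx_end_le_N le_trans by blast

lemma block_seg_ctx_end: "j \<le> n \<Longrightarrow> block_seg K 0 (ctx_end j) = pump_prefix K j @ loop_right c0 j"
proof (cases "j < n")
  case True
  then show ?thesis unfolding ctx_end_def loop_right_def using block_seg_prefix_loop[of j c0 K] by simp
next
  case False
  assume "j \<le> n"
  with False have "j = n" by simp
  then show ?thesis unfolding ctx_end_def loop_right_def using block_seg_pump pump_eq_prefix by simp
qed

lemma block_seg_ctx_start:
  "0 < j \<Longrightarrow> j \<le> n \<Longrightarrow> block_seg K 0 (ctx_start j) = pump_prefix K (j - 1) @ word_pow (vs ! (j - 1)) (c0 + k)"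
  unfolding ctx_start_def using block_seg_prefix_loop[of "j - 1" "c0 + k" K] by simp

lemma block_seg_ctx:
  assumes j: "j \<le> n"
  shows "block_seg K (ctx_start j) (ctx_end j) = ctx_pump c0 j"
proof (cases j)
  case 0
  then show ?thesis using block_seg_ctx_end[OF j]
    unfolding ctx_start_def loop_left_def pump_prefix_def by simp
next
  case (Suc i)
  have "block_seg K 0 (ctx_end j) = block_seg K 0 (ctx_start j) @ block_seg K (ctx_start j) (ctx_end j)"
    using block_seg_split[of 0 "ctx_start j" "ctx_end j" K] ctx_start_le_end[OF j] by simp
  then have "pump_prefix K j @ loop_right c0 j
      = pump_prefix K i @ word_pow (vs ! i) (c0 + k) @ block_seg K (ctx_start j) (ctx_end j)"
    using block_seg_ctx_end[OF j] block_seg_ctx_start[of j] j Suc by simp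
  moreover have "pump_prefix K j = pump_prefix K i @ word_pow (vs ! i) (c0 + k) @ word_pow (vs ! i) c0 @ us ! j"
  proof -
    have "K = (c0 + k) + c0" by simp
    then have "word_pow (vs ! i) K = word_pow (vs ! i) (c0 + k) @ word_pow (vs ! i) c0"
      by (simp only: word_pow_add)
    then show ?thesis using pump_prefix_Suc[of K i] Suc by simp
  qed
  ultimately show ?thesis unfolding loop_left_def using Suc by simp
qed

lemma seg_telescope:
  "m \<le> n \<Longrightarrow> concat (map (\<lambda>j. seg W (ctx_start j) (ctx_end j) @ seg W (ctx_end j) (ctx_start (Suc j))) [0..<m])
     = seg W 0 (ctx_start m)"
proof (induction m)
  case 0 then show ?case unfolding ctx_start_def seg_def by simp
next
  case (Suc m)
  then have m: "m < n" by simp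
  have "seg W 0 (ctx_start (Suc m)) = seg W 0 (ctx_start m) @ seg W (ctx_start m) (ctx_start (Suc m))"
    using seg_split ctx_start_le_end[of m] ctx_end_le_start_Suc[OF m] m by (metis le_trans less_imp_le_nat zero_le)
  also have "seg W (ctx_start m) (ctx_start (Suc m))
      = seg W (ctx_start m) (ctx_end m) @ seg W (ctx_end m) (ctx_start (Suc m))"
    using seg_split ctx_start_le_end[of m] ctx_end_le_start_Suc[OF m] m by simp
  finally show ?case using Suc by simp
qed

lemma offset_ctx_end_mod:
  assumes j: "j \<le> n"
  shows "offset Ys (ctx_end j) mod d = length (pump_prefix M j) mod d"
proof -
  have "offset Ys (ctx_end j) mod d = length (pump_prefix K j @ loop_right c0 j) mod d"
    using offset_Ys_mod[OF ctx_end_le_N] block_seg_ctx_end[OF j] by simp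
  also have "\<dots> = length (pump_prefix K j) mod d" using length_append_dvd_mod[OF dvd_length_loop_right] .
  also have "\<dots> = length (pump_prefix M j) mod d"
    using length_pump_prefix_mod[OF j, of K] length_pump_prefix_mod[OF j, of M] by simp
  finally show ?thesis .
qed

lemma offset_ctx_start_mod:
  assumes j: "0 < j" "j \<le> n"
  shows "offset Ys (ctx_start j) mod d = length (pump_prefix M (j - 1)) mod d"
proof -
  have "offset Ys (ctx_start j) mod d = length (pump_prefix K (j - 1) @ word_pow (vs ! (j - 1)) (c0 + k)) mod d"
    using offset_Ys_mod[OF ctx_start_le_N[OF j(2)]] block_seg_ctx_start[OF j] by simp
  also have "\<dots> = length (pump_prefix K (j - 1)) mod d"
    using length_append_dvd_mod[OF dvd_length_word_pow[OF dvd_length_loop]] j by simp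
  also have "\<dots> = length (pump_prefix M (j - 1)) mod d"
    using length_pump_prefix_mod[of "j - 1" K] length_pump_prefix_mod[of "j - 1" M] j by simp
  finally show ?thesis .
qed

lemma offset_ctx_start_gt:
  assumes j: "0 < j" "j \<le> n"
  shows "length (pump_prefix M (j - 1)) < offset Ys (ctx_start j)"
proof -
  have "length (pump_prefix M (j - 1)) < offset Ys ((j - 1) * Suc K + 1 + c0)"
    by (rule anchor_left) (use j in simp)
  also have "\<dots> \<le> offset Ys (ctx_start j)" unfolding ctx_start_def using j by (intro offset_mono) simp
  finally show ?thesis .
qed

lemma offset_ctx_end_le:
  assumes j: "j \<le> n"
  shows "offset Ys (ctx_end j) \<le> length (pump_prefix M j) + length (loop_right M j)"
proof (cases "j < n")
  case True
  have "offset Ys (ctx_end j) \<le> offset Ys (j * Suc K + 1 + (c0 + k))"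
    unfolding ctx_end_def using True by (intro offset_mono) simp
  also have "\<dots> < length (pump_prefix M j) + length (word_pow (vs ! j) M)" using anchor_right[OF True] .
  finally show ?thesis unfolding loop_right_def using True by simp
next
  case False
  with j have "j = n" by simp
  then show ?thesis using offset_Ys_N pump_eq_prefix unfolding loop_right_def ctx_end_def by simp
qed

lemma loop_segment:
  assumes i: "i < n"
  shows "emb_d d (word_pow (vs ! i) k) (seg Ws (ctx_end i) (ctx_start (Suc i)))"
    and "seg Ws (ctx_end i) (ctx_start (Suc i)) \<in> down_d d (wstar (vs ! i))"
proof -
  let ?a = "ctx_end i" and ?b = "ctx_start (Suc i)"
  have a: "?a = i * Suc K + 1 + c0" and b: "?b = i * Suc K + 1 + (c0 + k)"
    unfolding ctx_end_def ctx_start_def using i by simp_all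
  have bN: "?b \<le> N" using ctx_start_le_N[of "Suc i"] i by simp
  have ab: "?a \<le> ?b" using ctx_end_le_start_Suc[OF i] .
  have "block_seg K 0 ?b = block_seg K 0 ?a @ block_seg K ?a ?b"
    using block_seg_split[of 0 ?a ?b K] ab by simp
  then have "block_seg K ?a ?b = word_pow (vs ! i) k"
    using block_seg_prefix_loop[of i "c0 + k" K] block_seg_prefix_loop[of i c0 K] i a b
      word_pow_add[of "vs ! i" c0 k] by simp
  then show "emb_d d (word_pow (vs ! i) k) (seg Ws ?a ?b)"
    using emb_d_seg[OF blocks_emb_Ws, of ?a ?b] seg_blocks[OF bN] by simp
  define L where "L = length (pump_prefix M i)"
  define E where "E = L + length (word_pow (vs ! i) M)"
  have "emb_d d (seg Ws ?a ?b) (take (E - L) (drop L (pump M)))"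
  proof (rule emb_d_seg_Ws_window[OF ab bN])
    show "L \<le> offset Ys ?a" using anchor_left[OF i] unfolding a L_def by simp
    show "offset Ys ?b \<le> E" using anchor_right[OF i] unfolding b E_def L_def by simp
    show "E \<le> length (pump M)" using pump_split[OF i, of M] unfolding E_def L_def by simp
    show "offset Ys ?a mod d = L mod d" using offset_ctx_end_mod[of i] i unfolding L_def by simp
    show "offset Ys ?b mod d = E mod d"
      using offset_ctx_start_mod[of "Suc i"] i dvd_length_word_pow[OF dvd_length_loop[OF i], of M]
      unfolding E_def L_def by (auto elim!: dvdE)
  qed
  also have "take (E - L) (drop L (pump M)) = word_pow (vs ! i) M"
    using pump_split[OF i, of M] unfolding E_def L_def by simp
  finally have "emb_d d (seg Ws ?a ?b) (word_pow (vs ! i) M)" .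
  moreover have "word_pow (vs ! i) M \<in> wstar (vs ! i)" unfolding wstar_iff_word_pow by blast
  ultimately show "seg Ws ?a ?b \<in> down_d d (wstar (vs ! i))"
    unfolding down_d_def subword_d_iff_emb_d by blast
qed

lemma ctx_segment:
  assumes j: "j \<le> n"
  shows "emb_d d (us ! j) (seg Ws (ctx_start j) (ctx_end j))"
    and "seg Ws (ctx_start j) (ctx_end j) \<in> down_d d (ctx_lang j)"
proof -
  let ?a = "ctx_start j" and ?b = "ctx_end j"
  have ab: "?a \<le> ?b" using ctx_start_le_end[OF j] .
  have "emb_d d (us ! j) (us ! j @ loop_right c0 j)" by (rule emb_d_gap_right[OF dvd_length_loop_right])
  also have "emb_d d \<dots> (ctx_pump c0 j)"
    by (rule emb_d_gap_left[OF dvd_length_loop_left[OF j]])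
  also have "\<dots> = block_seg K ?a ?b" using block_seg_ctx[OF j] by simp
  also have "emb_d d \<dots> (seg Ws ?a ?b)"
    using emb_d_seg[OF blocks_emb_Ws, of ?a ?b] seg_blocks[OF ctx_end_le_N] by simp
  finally show "emb_d d (us ! j) (seg Ws ?a ?b)" .
  obtain P R where PR: "pump M = P @ ctx_pump M j @ R"
    "length P = (if j = 0 then 0 else length (pump_prefix M (j - 1)))"
    "length (P @ loop_left M j @ us ! j) = length (pump_prefix M j)"
    using pump_around_ctx[OF j] by blast
  define S where "S = length P"
  define E where "E = length (pump_prefix M j) + length (loop_right M j)"
  have "emb_d d (seg Ws ?a ?b) (take (E - S) (drop S (pump M)))"
  proof (rule emb_d_seg_Ws_window[OF ab ctx_end_le_N])
    show "S \<le> offset Ys ?a"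
      using offset_ctx_start_gt[of j] j PR(2) unfolding S_def by (cases "j = 0") simp_all
    show "offset Ys ?a mod d = S mod d"
      using offset_ctx_start_mod[of j] j PR(2) unfolding S_def ctx_start_def by (cases "j = 0") simp_all
    show "offset Ys ?b \<le> E" using offset_ctx_end_le[OF j] unfolding E_def .
    show "offset Ys ?b mod d = E mod d"
      using offset_ctx_end_mod[OF j] dvd_length_loop_right[of M j] unfolding E_def by (auto elim!: dvdE)
    show "E \<le> length (pump M)" using PR unfolding E_def by simp
  qed
  also have "take (E - S) (drop S (pump M)) = ctx_pump M j"
    using PR unfolding S_def E_def by simp
  finally show "seg Ws ?a ?b \<in> down_d d (ctx_lang j)" unfolding mem_down_ctx_lang_iff[OF j] by blast
qed

lemma associated_decomposition:
  obtains bus bvs where "length bus = length us" "length bvs = n" "interleave bus bvs = concat Ws"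
    "\<forall>i<n. emb_d d (word_pow (vs ! i) k) (bvs ! i) \<and> bvs ! i \<in> down_d d (wstar (vs ! i))"
    "\<forall>i<length us. emb_d d (us ! i) (bus ! i) \<and> bus ! i \<in> down_d d (ctx_lang i)"
proof -
  define bus where "bus = map (\<lambda>j. seg Ws (ctx_start j) (ctx_end j)) [0..<Suc n]"
  define bvs where "bvs = map (\<lambda>j. seg Ws (ctx_end j) (ctx_start (Suc j))) [0..<n]"
  have len: "length bus = length us" "length bvs = n" unfolding bus_def bvs_def using length_us by auto
  have "interleave bus bvs = concat (map (\<lambda>j. bus ! j @ bvs ! j) [0..<n]) @ bus ! n"
    using interleave_eq_concat_map[of bus bvs] len length_us by simp
  also have "map (\<lambda>j. bus ! j @ bvs ! j) [0..<n]
      = map (\<lambda>j. seg Ws (ctx_start j) (ctx_end j) @ seg Ws (ctx_end j) (ctx_start (Suc j))) [0..<n]"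
    unfolding bus_def bvs_def by (intro map_cong) (auto simp del: upt_Suc)
  also have "concat \<dots> = seg Ws 0 (ctx_start n)" using seg_telescope[of n Ws] by simp
  also have "bus ! n = seg Ws (ctx_start n) N" unfolding bus_def ctx_end_def by (simp del: upt_Suc)
  also have "seg Ws 0 (ctx_start n) @ seg Ws (ctx_start n) N = concat Ws"
    using seg_split[of 0 "ctx_start n" N Ws] ctx_start_le_N[of n] seg_full[of Ws] length_Ws by simp
  finally have "interleave bus bvs = concat Ws" .
  moreover have "\<forall>i<n. emb_d d (word_pow (vs ! i) k) (bvs ! i) \<and> bvs ! i \<in> down_d d (wstar (vs ! i))"
    unfolding bvs_def using loop_segment by simp
  moreover have "\<forall>i<length us. emb_d d (us ! i) (bus ! i) \<and> bus ! i \<in> down_d d (ctx_lang i)"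
    unfolding bus_def using ctx_segment length_us by (simp del: upt_Suc)
  ultimately show ?thesis using len that by simp
qed

end

context pattern
begin

lemma irreducible_imp_uniform_exponent:
  assumes "irreducible_pattern d us vs"
  shows "\<exists>c. \<forall>i<n. \<forall>M. \<not> emb_d d (pump c) (pump_prefix M i @ pump_suffix M i)"
proof (rule ex_common_bound)
  fix i assume i: "i < n"
  then have "down_d d (pat_lang us (vs[i := []])) \<subset> down_d d (pat_lang us vs)"
    using assms unfolding irreducible_pattern_def by blast
  then obtain z where z: "z \<in> down_d d (pat_lang us vs)" "z \<notin> down_d d (pat_lang us (vs[i := []]))"
    by blast
  then obtain c where zc: "emb_d d z (pump c)" unfolding down_pat_lang_eq by blast
  have deleted: "pump_prefix M i @ pump_suffix M i \<in> pat_lang us (vs[i := []])" for M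
    unfolding pat_lang_def interleave_pump_delete[OF i, of M, symmetric]
    by (rule CollectI, rule exI[of _ "map (\<lambda>v. word_pow v M) (vs[i := []])"]) (auto simp: wstar_iff_word_pow)
  have "\<not> emb_d d (pump c) (pump_prefix M i @ pump_suffix M i)" for M
  proof
    assume "emb_d d (pump c) (pump_prefix M i @ pump_suffix M i)"
    with zc have "emb_d d z (pump_prefix M i @ pump_suffix M i)" by (rule emb_d_trans)
    with deleted[of M] have "z \<in> down_d d (pat_lang us (vs[i := []]))"
      unfolding down_d_def subword_d_iff_emb_d by blast
    with z(2) show False ..
  qed
  then show "\<exists>c. \<forall>M. \<not> emb_d d (pump c) (pump_prefix M i @ pump_suffix M i)" by blast
next
  fix i a b
  assume none: "\<forall>M. \<not> emb_d d (pump a) (pump_prefix M i @ pump_suffix M i)" and "a \<le> b"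
  show "\<forall>M. \<not> emb_d d (pump b) (pump_prefix M i @ pump_suffix M i)"
  proof (intro allI notI)
    fix M assume "emb_d d (pump b) (pump_prefix M i @ pump_suffix M i)"
    with emb_d_pump_mono[OF \<open>a \<le> b\<close>] have "emb_d d (pump a) (pump_prefix M i @ pump_suffix M i)"
      by (rule emb_d_trans)
    with none show False by blast
  qed
qed

lemma Adh_imp_associated:
  assumes irr: "irreducible_pattern d us vs"
    and adh: "down_d d (pat_lang us vs) \<in> Adh_d d L"
  shows "associated d us vs L"
  unfolding associated_def subword_d_iff_emb_d word_pow_def[symmetric]
proof
  fix k :: nat
  obtain c0 where c0: "\<And>i M. i < n \<Longrightarrow> \<not> emb_d d (pump c0) (pump_prefix M i @ pump_suffix M i)"
    using irreducible_imp_uniform_exponent[OF irr] by blast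
  let ?K = "2 * c0 + k" and ?I = "down_d d (pat_lang us vs)"
  have "pump ?K \<in> ?I" unfolding down_pat_lang_eq using emb_d_refl by blast
  then have "pump ?K \<in> down_d d (L \<inter> ?I)" using adh unfolding Adh_d_def by blast
  then obtain w where w: "w \<in> L" "w \<in> ?I" "emb_d d (pump ?K) w"
    unfolding down_d_def[of d "L \<inter> ?I"] subword_d_iff_emb_d by blast
  then obtain M where "emb_d d w (pump M)" unfolding down_pat_lang_eq by blast
  then have wM: "emb_d d w (pump (M + c0))" using emb_d_trans[OF _ emb_d_pump_mono[of M "M + c0"]] by simp
  obtain Ws where Ws: "list_all2 (emb_d d) (map (block ?K) [0..<n * Suc ?K + 1]) Ws" "w = concat Ws"
    using emb_d_concat_split[of "map (block ?K) [0..<n * Suc ?K + 1]" d w] w(3) block_seg_pump[of ?K]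
    unfolding block_seg_def by auto
  moreover have "Ws \<noteq> []" using Ws(1) list_all2_lengthD by fastforce
  ultimately obtain Ys where Ys: "list_all2 (emb_d d) Ws Ys" "pump (M + c0) = concat Ys"
    using emb_d_concat_split[of Ws d "pump (M + c0)"] wM by auto
  interpret pump_chain d us vs c0 k "M + c0" Ws Ys
    using c0 Ws(1) Ys by unfold_locales auto
  obtain bus bvs where "length bus = length us" "length bvs = n" "interleave bus bvs = concat Ws"
    "\<forall>i<n. emb_d d (word_pow (vs ! i) k) (bvs ! i) \<and> bvs ! i \<in> down_d d (wstar (vs ! i))"
    "\<forall>i<length us. emb_d d (us ! i) (bus ! i) \<and> bus ! i \<in> down_d d (ctx_lang i)"
    by (rule associated_decomposition)
  with Ws(2) w(1) show "\<exists>bus bvs. length bus = length us \<and> length bvs = n \<and> interleave bus bvs \<in> L \<and>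
      (\<forall>i<n. emb_d d (word_pow (vs ! i) k) (bvs ! i) \<and> bvs ! i \<in> down_d d (wstar (vs ! i))) \<and>
      (\<forall>i<length us. emb_d d (us ! i) (bus ! i) \<and> bus ! i \<in> down_d d (ctx_lang i))"
    by (intro exI[of _ bus] exI[of _ bvs] conjI) simp_all
qed

end

theorem mainTheorem15:
  fixes d :: nat and us vs :: "'a list list" and L :: "'a list set"
  assumes "finite (UNIV :: 'a set)"
    and "d \<ge> 1"
    and "irreducible_pattern d us vs"
  shows "down_d d (pat_lang us vs) \<in> Adh_d d L \<longleftrightarrow> associated d us vs L"
proof -
  interpret pattern d us vs
    using assms(3) unfolding irreducible_pattern_def loop_pattern_def by unfold_locales auto
  show ?thesis using Adh_imp_associated[OF assms(3)] associated_imp_Adh by blast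
qed

end
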